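(* Let $V$ be a braided vector space of diagonal type over a field $F$ of characteristic zero with basis $x_1,\dots,x_n$ and braiding $C(x_i\otimes x_j)=p_{i,j}x_j\otimes x_i$, and let $\mathfrak B(V)$ be its Nichols algebra. Let $i\neq j$. Then in $\mathfrak B(V)$: (i) $[x_i,x_j]_L=0$ if and only if $p_{i,j}=p_{j,i}=1$; (ii) $[x_i,x_j]_R=0$ if and only if $p_{i,j}=p_{j,i}=1$, or $p_{i,j}=\omega,\ p_{j,i}=\omega^2$, or $p_{i,j}=\omega^2,\ p_{j,i}=\omega$, where $\omega$ is a primitive cube root of unity.
   Context: $\mathfrak B(V)$ is the quotient of $T(V)$ by $\bigoplus_{m\ge2}\ker S_m$ (kernels of quantum symmetrizers). For generators, $[x_i,x_j]_L=p_{j,i}x_ix_j-p_{i,j}x_jx_i$ and $[x_i,x_j]_R=p_{i,j}x_ix_j-p_{j,i}x_jx_i$. *)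

theory Defs
  imports "HOL-Combinatorics.Permutations"
begin

text \<open>Tensor algebra T(V) of a vector space V with basis x_i (i ranging over a finite
index type 'i), over a field 'a: elements are finitely supported functions from words
(lists of indices) to coefficients; the word w stands for x_{w!0} x_{w!1} ... \<close>

definition tgen :: "'i \<Rightarrow> ('i list \<Rightarrow> 'a::field)" where
  "tgen i = (\<lambda>w. if w = [i] then 1 else 0)"

definition tmul :: "('i list \<Rightarrow> 'a::field) \<Rightarrow> ('i list \<Rightarrow> 'a) \<Rightarrow> ('i list \<Rightarrow> 'a)" where
  "tmul u v = (\<lambda>w. \<Sum>k\<le>length w. u (take k w) * v (drop k w))"

definition tsmul :: "'a::field \<Rightarrow> ('i list \<Rightarrow> 'a) \<Rightarrow> ('i list \<Rightarrow> 'a)" where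
  "tsmul c u = (\<lambda>w. c * u w)"

definition thom :: "nat \<Rightarrow> ('i list \<Rightarrow> 'a::field) \<Rightarrow> ('i list \<Rightarrow> 'a)" where
  "thom m u = (\<lambda>w. if length w = m then u w else 0)"

text \<open>Diagonal braiding C(x_i \<otimes> x_j) = p i j x_j \<otimes> x_i.  The Matsumoto lift of a
permutation \<sigma> of the m tensor positions acts on the basis word w by moving the letter
at position a to position \<sigma> a, with coefficient the product of p (w!a) (w!b) over the
pairs a < b inverted by \<sigma>.\<close>

definition perm_word :: "(nat \<Rightarrow> nat) \<Rightarrow> 'i list \<Rightarrow> 'i list" where
  "perm_word \<sigma> w = map (\<lambda>b. w ! (inv \<sigma> b)) [0..<length w]"

definition braid_coef :: "('i \<Rightarrow> 'i \<Rightarrow> 'a::field) \<Rightarrow> (nat \<Rightarrow> nat) \<Rightarrow> 'i list \<Rightarrow> 'a" where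
  "braid_coef p \<sigma> w =
     (\<Prod>(a,b)\<in>{(a,b). a < b \<and> b < length w \<and> \<sigma> b < \<sigma> a}. p (w ! a) (w ! b))"

definition qsymm :: "('i::finite \<Rightarrow> 'i \<Rightarrow> 'a::field) \<Rightarrow> nat \<Rightarrow> ('i list \<Rightarrow> 'a) \<Rightarrow> ('i list \<Rightarrow> 'a)" where
  "qsymm p m u = (\<lambda>v. \<Sum>w\<in>{w. length w = m}. \<Sum>\<sigma>\<in>{\<sigma>. \<sigma> permutes {..<m}}.
       u w * braid_coef p \<sigma> w * (if perm_word \<sigma> w = v then 1 else 0))"

text \<open>u is zero in the Nichols algebra B(V) = T(V) / \<Oplus>_{m\<ge>2} ker S_m, i.e. u lies in
that graded subspace.\<close>
definition nichols_zero :: "('i::finite \<Rightarrow> 'i \<Rightarrow> 'a::field) \<Rightarrow> ('i list \<Rightarrow> 'a) \<Rightarrow> bool" where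
  "nichols_zero p u \<longleftrightarrow> finite {w. u w \<noteq> 0} \<and> (\<forall>w. length w < 2 \<longrightarrow> u w = 0) \<and>
     (\<forall>m\<ge>2. qsymm p m (thom m u) = (\<lambda>_. 0))"

definition bracketL :: "('i \<Rightarrow> 'i \<Rightarrow> 'a::field) \<Rightarrow> 'i \<Rightarrow> 'i \<Rightarrow> ('i list \<Rightarrow> 'a)" where
  "bracketL p i j = (\<lambda>w. tsmul (p j i) (tmul (tgen i) (tgen j)) w
                        - tsmul (p i j) (tmul (tgen j) (tgen i)) w)"

definition bracketR :: "('i \<Rightarrow> 'i \<Rightarrow> 'a::field) \<Rightarrow> 'i \<Rightarrow> 'i \<Rightarrow> ('i list \<Rightarrow> 'a)" where
  "bracketR p i j = (\<lambda>w. tsmul (p i j) (tmul (tgen i) (tgen j)) w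
                        - tsmul (p j i) (tmul (tgen j) (tgen i)) w)"

definition primitive_cube_root :: "'a::field \<Rightarrow> bool" where
  "primitive_cube_root \<omega> \<longleftrightarrow> \<omega> ^ 3 = 1 \<and> \<omega> \<noteq> 1"

end

theory Submission
  imports Defs
begin

text \<open>Both brackets are homogeneous of degree two, and in degree two the defining ideal of
  the Nichols algebra is just the kernel of \<open>S\<^sub>2 = id + c\<close>, which maps the span of
  \<open>x\<^sub>i x\<^sub>j\<close> and \<open>x\<^sub>j x\<^sub>i\<close> to itself. So \<open>\<alpha> x\<^sub>i x\<^sub>j - \<beta> x\<^sub>j x\<^sub>i\<close> vanishes in \<open>\<B>(V)\<close> iff
  \<open>\<alpha> = p\<^sub>j\<^sub>i \<beta>\<close> and \<open>\<beta> = p\<^sub>i\<^sub>j \<alpha>\<close>. For the left bracket this says \<open>p\<^sub>i\<^sub>j = p\<^sub>j\<^sub>i = 1\<close>; for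
  the right bracket it says \<open>p\<^sub>i\<^sub>j = p\<^sub>j\<^sub>i\<^sup>2\<close> and \<open>p\<^sub>j\<^sub>i = p\<^sub>i\<^sub>j\<^sup>2\<close>, so \<open>p\<^sub>i\<^sub>j\<^sup>4 = p\<^sub>i\<^sub>j\<close> forces
  \<open>p\<^sub>i\<^sub>j\<^sup>3 = 1\<close>.\<close>

lemma id_ne_transpose_01: "id \<noteq> transpose (0::nat) 1"
  by (metis transpose_eq_id_iff zero_neq_one)

lemma permutations_lessThan_2: "{\<sigma>. \<sigma> permutes {..<2::nat}} = {id, transpose 0 1}"
proof (rule sym, rule card_subset_eq)
  show "finite {\<sigma>. \<sigma> permutes {..<2::nat}}"
    by (simp add: finite_permutations)
  show "{id, transpose 0 1} \<subseteq> {\<sigma>. \<sigma> permutes {..<2::nat}}"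
    by (simp add: permutes_swap_id)
  have "card {id, transpose (0::nat) 1} = 2"
    using id_ne_transpose_01 by (metis card_2_iff)
  then show "card {id, transpose (0::nat) 1} = card {\<sigma>. \<sigma> permutes {..<2::nat}}"
    by (simp add: card_permutations)
qed

lemma length_perm_word [simp]: "length (perm_word \<sigma> w) = length w"
  by (simp add: perm_word_def)

lemma perm_word_id [simp]: "perm_word id w = w"
  by (simp add: perm_word_def map_nth)

lemma perm_word_transpose_01: "perm_word (transpose 0 1) [a, b] = [b, a]"
  by (simp add: perm_word_def upt_rec)

lemma braid_coef_id [simp]: "braid_coef p id w = 1"
  by (auto simp: braid_coef_def intro!: prod.neutral)

lemma braid_coef_transpose_01: "braid_coef p (transpose 0 1) [a, b] = p a b"
proof -
  have "{(x, y). x < y \<and> y < length [a, b] \<and> transpose 0 1 y < transpose (0::nat) 1 x} = {(0, 1)}"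
    by (auto simp: transpose_def)
  then show ?thesis by (simp add: braid_coef_def)
qed

lemma qsymm_outside_degree:
  assumes "length v \<noteq> m"
  shows "qsymm p m u v = 0"
  using assms by (auto simp: qsymm_def intro!: sum.neutral)

lemma qsymm_zero [simp]: "qsymm p m (\<lambda>_. 0) = (\<lambda>_. 0)"
  by (simp add: qsymm_def)

lemma finite_words_of_length: "finite {w::'i::finite list. length w = m}"
  using finite_lists_length_eq[of "UNIV :: 'i set" m] by simp

lemma length_2_iff: "length w = 2 \<longleftrightarrow> (\<exists>a b. w = [a, b])"
  by (auto simp: numeral_2_eq_2 length_Suc_conv)

lemma qsymm_2_apply:
  fixes p :: "'i::finite \<Rightarrow> 'i \<Rightarrow> 'a::field"
  shows "qsymm p 2 u [a, b] = u [a, b] + p b a * u [b, a]"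
proof -
  let ?\<tau> = "transpose (0::nat) 1"
  have "qsymm p 2 u [a, b] = (\<Sum>w | length w = 2. u w * (if w = [a, b] then 1 else 0))
      + (\<Sum>w | length w = 2. u w * braid_coef p ?\<tau> w * (if perm_word ?\<tau> w = [a, b] then 1 else 0))"
    using id_ne_transpose_01 unfolding qsymm_def permutations_lessThan_2
    by (simp add: sum.distrib)
  also have "(\<Sum>w | length w = 2. u w * (if w = [a, b] then 1 else 0)) = u [a, b]"
    by (simp add: finite_words_of_length mult.commute[of "u _"] if_distrib cong: if_cong)
  also have "(\<Sum>w | length w = 2. u w * braid_coef p ?\<tau> w * (if perm_word ?\<tau> w = [a, b] then 1 else 0))
      = (\<Sum>w | length w = 2. if w = [b, a] then p b a * u [b, a] else 0)"
  proof (rule sum.cong)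
    fix w :: "'i list" assume "w \<in> {w. length w = 2}"
    then obtain c d where "w = [c, d]" by (auto simp: length_2_iff)
    then show "u w * braid_coef p ?\<tau> w * (if perm_word ?\<tau> w = [a, b] then 1 else 0)
        = (if w = [b, a] then p b a * u [b, a] else 0)"
      by (simp only: perm_word_transpose_01 braid_coef_transpose_01) auto
  qed simp
  also have "\<dots> = p b a * u [b, a]"
    by (simp add: finite_words_of_length)
  finally show ?thesis .
qed

lemma tmul_tgen_tgen: "tmul (tgen i) (tgen j) = (\<lambda>w. if w = [i, j] then 1 else 0)"
proof
  fix w
  have split_iff: "take k w = [i] \<and> drop k w = [j] \<longleftrightarrow> k = 1 \<and> w = [i, j]"
    if "k \<le> length w" for k
  proof
    assume parts: "take k w = [i] \<and> drop k w = [j]"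
    have "k = length (take k w)" using that by simp
    also have "\<dots> = 1" using parts by simp
    finally have "k = 1" .
    moreover have "w = [i, j]" using parts by (metis append_Cons append_Nil append_take_drop_id)
    ultimately show "k = 1 \<and> w = [i, j]" ..
  qed auto
  have "tmul (tgen i) (tgen j) w = (\<Sum>k\<le>length w. if k = 1 \<and> w = [i, j] then 1 else 0)"
    unfolding tmul_def
  proof (rule sum.cong)
    fix k assume "k \<in> {..length w}"
    then show "tgen i (take k w) * tgen j (drop k w) = (if k = 1 \<and> w = [i, j] then 1 else 0)"
      using split_iff[of k] unfolding tgen_def by auto
  qed simp
  also have "\<dots> = (if w = [i, j] then 1 else 0)"
    by auto
  finally show "tmul (tgen i) (tgen j) w = (if w = [i, j] then 1 else 0)" .
qed

lemma nichols_zero_quadratic_iff: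
  fixes p :: "'i::finite \<Rightarrow> 'i \<Rightarrow> 'a::field"
  assumes quadratic: "\<And>w. length w \<noteq> 2 \<Longrightarrow> u w = 0"
  shows "nichols_zero p u \<longleftrightarrow> (\<forall>a b. u [a, b] + p b a * u [b, a] = 0)"
proof -
  have "{w. u w \<noteq> 0} \<subseteq> {w. length w = 2}"
    using quadratic by blast
  then have "finite {w. u w \<noteq> 0}"
    using finite_words_of_length finite_subset by blast
  moreover have "\<forall>w. length w < 2 \<longrightarrow> u w = 0"
    using quadratic by simp
  moreover have "thom m u = (if m = 2 then u else (\<lambda>_. 0))" for m
    using quadratic by (auto simp: thom_def fun_eq_iff)
  then have "(\<forall>m\<ge>2. qsymm p m (thom m u) = (\<lambda>_. 0)) \<longleftrightarrow> qsymm p 2 u = (\<lambda>_. 0)"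
    by (metis order_refl qsymm_zero)
  ultimately have "nichols_zero p u \<longleftrightarrow> qsymm p 2 u = (\<lambda>_. 0)"
    by (simp add: nichols_zero_def)
  also have "\<dots> \<longleftrightarrow> (\<forall>a b. u [a, b] + p b a * u [b, a] = 0)"
  proof
    assume "qsymm p 2 u = (\<lambda>_. 0)"
    then show "\<forall>a b. u [a, b] + p b a * u [b, a] = 0"
      by (metis qsymm_2_apply)
  next
    assume degree_2: "\<forall>a b. u [a, b] + p b a * u [b, a] = 0"
    show "qsymm p 2 u = (\<lambda>_. 0)"
    proof
      fix v :: "'i list"
      show "qsymm p 2 u v = 0"
        using degree_2 by (cases "length v = 2") (auto simp: length_2_iff qsymm_2_apply qsymm_outside_degree)
    qed
  qed
  finally show ?thesis .
qed

lemma nichols_zero_supported_pair_iff: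
  fixes p :: "'i::finite \<Rightarrow> 'i \<Rightarrow> 'a::field"
  assumes support: "\<And>w. w \<noteq> [i, j] \<Longrightarrow> w \<noteq> [j, i] \<Longrightarrow> u w = 0"
  shows "nichols_zero p u \<longleftrightarrow> u [i, j] + p j i * u [j, i] = 0 \<and> u [j, i] + p i j * u [i, j] = 0"
proof -
  have "u w = 0" if "length w \<noteq> 2" for w
    using that by (intro support) auto
  then have "nichols_zero p u \<longleftrightarrow> (\<forall>a b. u [a, b] + p b a * u [b, a] = 0)"
    by (rule nichols_zero_quadratic_iff)
  also have "\<dots> \<longleftrightarrow> u [i, j] + p j i * u [j, i] = 0 \<and> u [j, i] + p i j * u [i, j] = 0"
  proof
    assume pair: "u [i, j] + p j i * u [j, i] = 0 \<and> u [j, i] + p i j * u [i, j] = 0"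
    show "\<forall>a b. u [a, b] + p b a * u [b, a] = 0"
    proof (intro allI)
      fix a b
      show "u [a, b] + p b a * u [b, a] = 0"
      proof (cases "[a, b] = [i, j] \<or> [a, b] = [j, i]")
        case True
        then show ?thesis using pair by auto
      next
        case False
        then have "[b, a] \<noteq> [i, j]" "[b, a] \<noteq> [j, i]" by auto
        with False show ?thesis by (simp add: support)
      qed
    qed
  qed auto
  finally show ?thesis .
qed

lemma mutual_squares_iff:
  fixes a b :: "'a::field"
  assumes "a \<noteq> 0"
  shows "(a = b * b \<and> b = a * a) \<longleftrightarrow> (a = 1 \<and> b = 1) \<or>
    (\<exists>\<omega>. primitive_cube_root \<omega> \<and> ((a = \<omega> \<and> b = \<omega>^2) \<or> (a = \<omega>^2 \<and> b = \<omega>)))"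
proof
  assume "a = b * b \<and> b = a * a"
  \<comment> \<open>never handed to the simplifier together: they rewrite into each other\<close>
  then have a_sq: "a = b * b" and b_sq: "b = a * a"
    by blast+
  have "a * a ^ 3 = (a * a) * (a * a)"
    by (simp add: power3_eq_cube mult.assoc)
  also have "\<dots> = a"
    by (simp only: b_sq[symmetric] a_sq[symmetric])
  also have "\<dots> = a * 1"
    by simp
  finally have cube: "a ^ 3 = 1"
    using assms by (metis mult_left_cancel)
  have square: "b = a ^ 2"
    using b_sq by (simp add: power2_eq_square)
  show "(a = 1 \<and> b = 1) \<or>
      (\<exists>\<omega>. primitive_cube_root \<omega> \<and> ((a = \<omega> \<and> b = \<omega>^2) \<or> (a = \<omega>^2 \<and> b = \<omega>)))"
  proof (cases "a = 1")
    case True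
    then show ?thesis using square by simp
  next
    case False
    then have "primitive_cube_root a"
      using cube by (simp add: primitive_cube_root_def)
    then show ?thesis using square by blast
  qed
next
  assume "(a = 1 \<and> b = 1) \<or>
      (\<exists>\<omega>. primitive_cube_root \<omega> \<and> ((a = \<omega> \<and> b = \<omega>^2) \<or> (a = \<omega>^2 \<and> b = \<omega>)))"
  then show "a = b * b \<and> b = a * a"
  proof
    assume "a = 1 \<and> b = 1"
    then show ?thesis by simp
  next
    assume "\<exists>\<omega>. primitive_cube_root \<omega> \<and> ((a = \<omega> \<and> b = \<omega>^2) \<or> (a = \<omega>^2 \<and> b = \<omega>))"
    then obtain \<omega> where "primitive_cube_root \<omega>" and ab: "(a = \<omega> \<and> b = \<omega>^2) \<or> (a = \<omega>^2 \<and> b = \<omega>)"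
      by blast
    then have "\<omega> ^ 3 = 1"
      by (simp add: primitive_cube_root_def)
    moreover have "\<omega>^2 * \<omega>^2 = \<omega> ^ 3 * \<omega>"
      by (simp add: power2_eq_square power3_eq_cube mult.assoc)
    ultimately have "\<omega>^2 * \<omega>^2 = \<omega>"
      by simp
    then show ?thesis
      using ab by (auto simp: power2_eq_square)
  qed
qed

theorem lemma1p4:
  fixes p :: "'i::finite \<Rightarrow> 'i \<Rightarrow> 'a::field_char_0"
    and i j :: 'i
  assumes nonzero: "\<forall>k l. p k l \<noteq> 0"
    and ij: "i \<noteq> j"
  shows "(nichols_zero p (bracketL p i j) \<longleftrightarrow> p i j = 1 \<and> p j i = 1)
       \<and> (nichols_zero p (bracketR p i j) \<longleftrightarrow>
            (p i j = 1 \<and> p j i = 1) \<or>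
            (\<exists>\<omega>. primitive_cube_root \<omega> \<and>
               ((p i j = \<omega> \<and> p j i = \<omega>^2) \<or> (p i j = \<omega>^2 \<and> p j i = \<omega>))))"
proof -
  have "nichols_zero p (bracketL p i j) \<longleftrightarrow> p j i = p j i * p i j \<and> p i j = p i j * p j i"
    using ij by (subst nichols_zero_supported_pair_iff) (auto simp: bracketL_def tsmul_def tmul_tgen_tgen)
  also have "\<dots> \<longleftrightarrow> p i j = 1 \<and> p j i = 1"
    using nonzero by auto
  finally have bracketL_iff: "nichols_zero p (bracketL p i j) \<longleftrightarrow> p i j = 1 \<and> p j i = 1" .
  have "nichols_zero p (bracketR p i j) \<longleftrightarrow> p i j = p j i * p j i \<and> p j i = p i j * p i j"
    using ij by (subst nichols_zero_supported_pair_iff) (auto simp: bracketR_def tsmul_def tmul_tgen_tgen)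
  also have "\<dots> \<longleftrightarrow> (p i j = 1 \<and> p j i = 1) \<or>
      (\<exists>\<omega>. primitive_cube_root \<omega> \<and> ((p i j = \<omega> \<and> p j i = \<omega>^2) \<or> (p i j = \<omega>^2 \<and> p j i = \<omega>)))"
    using nonzero by (simp add: mutual_squares_iff)
  finally show ?thesis
    using bracketL_iff by blast
qed

end
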